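(* Let $G_1$ be a graph on $n$ nodes with Laplacian $Q_1$, and let $G_1^c$ be its complement, whose Laplacian is $nI-J-Q_1$ ($J$ the $n\times n$ all-one matrix). For $p\ge0$ let $$Q(p)=\begin{bmatrix} Q_1+npI & -pJ\\ -pJ & nI-J-Q_1+npI\end{bmatrix}$$ (the graph $G_1$ coupled to $G_1^c$ by an $n$-to-$n$ interconnection of weight $p$), with eigenvalues $0=\mu_N(p)\le\mu_{N-1}(p)\le\dots\le\mu_1(p)$, $N=2n$. Define $p^*=\sup\big(\{0\}\cup\{p>0:\ \mu_{N-1}(p)=2np\}\big)$. Then $$p^*=\min\left(\frac{\mu_{n-1}(Q_1)}{n},\ 1-\frac{\mu_1(Q_1)}{n}\right),$$ where $\mu_{n-1}(Q_1)$ and $\mu_1(Q_1)$ are the second smallest and the largest eigenvalue of $Q_1$, respectively.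
   Context: $2np$ is an eigenvalue of $Q(p)$ with eigenvector $[u^T,-u^T]^T$, $u$ the all-one vector; $p^*$ is the structural transition threshold, described in the paper as the coupling beyond which the algebraic connectivity $\mu_{N-1}$ no longer equals $2np$ (formalized here as the supremum). *)

theory Defs
  imports "Jordan_Normal_Form.Char_Poly" "HOL-Computational_Algebra.Polynomial"
begin

definition simple_graph :: "nat \<Rightarrow> (nat \<Rightarrow> nat \<Rightarrow> bool) \<Rightarrow> bool" where
  "simple_graph n E \<longleftrightarrow> (\<forall>i<n. \<forall>j<n. E i j = E j i) \<and> (\<forall>i<n. \<not> E i i)"

definition laplacian :: "nat \<Rightarrow> (nat \<Rightarrow> nat \<Rightarrow> bool) \<Rightarrow> real mat" where
  "laplacian n E = mat n n (\<lambda>(i,j). if i = j then real (card {k. k < n \<and> E i k})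
                                      else if E i j then -1 else 0)"

definition ones_mat :: "nat \<Rightarrow> real mat" where
  "ones_mat n = mat n n (\<lambda>_. 1)"

text \<open>Eigenvalues with multiplicity (roots of the characteristic polynomial), in the paper's
  descending indexing: mu A 1 \<ge> mu A 2 \<ge> ... \<ge> mu A (dim A).\<close>
definition mu :: "real mat \<Rightarrow> nat \<Rightarrow> real" where
  "mu A k = rev (sorted_list_of_multiset (proots (char_poly A))) ! (k - 1)"

definition coupled_Q :: "nat \<Rightarrow> real mat \<Rightarrow> real \<Rightarrow> real mat" where
  "coupled_Q n Q1 p = four_block_mat
      (Q1 + (real n * p) \<cdot>\<^sub>m 1\<^sub>m n)   ((- p) \<cdot>\<^sub>m ones_mat n)
      ((- p) \<cdot>\<^sub>m ones_mat n)           (real n \<cdot>\<^sub>m 1\<^sub>m n - ones_mat n - Q1 + (real n * p) \<cdot>\<^sub>m 1\<^sub>m n)"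

definition p_star :: "nat \<Rightarrow> real mat \<Rightarrow> real" where
  "p_star n Q1 = Sup ({0} \<union> {p. p > 0 \<and> mu (coupled_Q n Q1 p) (2 * n - 1) = 2 * real n * p})"

end

theory Submission
  imports Defs
begin

text \<open>
  The Laplacian \<open>Q\<^sub>1\<close> is symmetric with zero row sums, so its eigenvalues are real,
  \<open>0 = \<lambda>\<^sub>n \<le> \<lambda>\<^sub>n\<^sub>-\<^sub>1 \<le> \<dots> \<le> \<lambda>\<^sub>1\<close>, and \<open>\<lambda>\<^sub>1 \<le> n\<close> because \<open>n - \<lambda>\<close> is an eigenvalue
  of the complement's Laplacian for every nonzero eigenvalue \<open>\<lambda>\<close>. The off-diagonal blocks
  \<open>p J\<close> of \<open>Q(p)\<close> commute with the diagonal blocks, and all blocks have constant row sums;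
  a block-determinant computation then shows that the spectrum of \<open>Q(p)\<close> is
  \<open>0, 2np\<close> together with \<open>\<lambda>\<^sub>i + np\<close> and \<open>n + np - \<lambda>\<^sub>i\<close> for \<open>i < n\<close>. Hence
  \<open>\<mu>\<^sub>N\<^sub>-\<^sub>1(p) = min (2np) (min (\<lambda>\<^sub>n\<^sub>-\<^sub>1 + np) (n + np - \<lambda>\<^sub>1))\<close>, which equals \<open>2np\<close>
  exactly for \<open>p \<le> min (\<lambda>\<^sub>n\<^sub>-\<^sub>1 / n) (1 - \<lambda>\<^sub>1 / n)\<close>: the set defining \<open>p\<^sup>*\<close> is
  an interval whose right end point is this minimum.
\<close>

section \<open>Linear factors, characteristic polynomials and determinants\<close>

lemma eigenvector_mult_vec_index:
  assumes "eigenvector A v l" and "A \<in> carrier_mat n n" and "i < n"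
  shows "(\<Sum>j<n. A $$ (i, j) * v $ j) = l * v $ i"
proof -
  have "(A *\<^sub>v v) $ i = l * v $ i"
    using assms by (auto simp: eigenvector_def)
  then show ?thesis
    using assms by (auto simp: eigenvector_def scalar_prod_def atLeast0LessThan)
qed

lemma poly_linear_factors: "poly (\<Prod>a\<leftarrow>L. [:- a, 1:]) t = (\<Prod>a\<leftarrow>L. t - (a :: 'a :: comm_ring_1))"
  by (induction L) (simp_all add: left_diff_distrib)

lemma linear_factors_reflect:
  "(- 1) ^ length L * (\<Prod>a\<leftarrow>L. t - a) = (\<Prod>a\<leftarrow>L. a - (t :: 'a :: comm_ring_1))"
  by (induction L) (simp_all add: algebra_simps)

lemma proots_linear_factors: "proots (\<Prod>a\<leftarrow>L. [:- a, 1:]) = mset (L :: 'a :: idom list)"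
proof (induction L)
  case (Cons a L)
  have "(\<Prod>a\<leftarrow>L. [:- a, 1:]) \<noteq> 0"
    by (auto simp: prod_list_zero_iff)
  with Cons.IH show ?case
    by (simp add: proots_mult del: mult_pCons_left)
qed simp

lemma det_char_matrix_form:
  fixes Q :: "'a :: field mat"
  assumes "Q \<in> carrier_mat n n"
  shows "det (t \<cdot>\<^sub>m 1\<^sub>m n - Q) = poly (char_poly Q) t"
proof -
  have "- char_matrix Q t = t \<cdot>\<^sub>m 1\<^sub>m n - Q"
    using assms by (intro eq_matI) (auto simp: char_matrix_def)
  then show ?thesis
    using char_poly_matrix[OF assms] by simp
qed

lemma det_shifted:
  fixes Q :: "'a :: field mat"
  assumes "Q \<in> carrier_mat n n"
  shows "det (t \<cdot>\<^sub>m 1\<^sub>m n + Q) = (- 1) ^ n * poly (char_poly Q) (- t)"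
proof -
  have "t \<cdot>\<^sub>m 1\<^sub>m n + Q = (- 1) \<cdot>\<^sub>m ((- t) \<cdot>\<^sub>m 1\<^sub>m n - Q)"
    using assms by (intro eq_matI) auto
  then show ?thesis
    using assms by (simp add: det_smult det_char_matrix_form)
qed

lemma real_symmetric_eigenvalue_real:
  fixes A :: "real mat"
  assumes A: "A \<in> carrier_mat n n"
    and sym: "\<And>i j. i < n \<Longrightarrow> j < n \<Longrightarrow> A $$ (i, j) = A $$ (j, i)"
    and "eigenvalue (map_mat complex_of_real A) a"
  shows "a \<in> \<real>"
proof -
  let ?C = "map_mat complex_of_real A"
  obtain w where ev: "eigenvector ?C w a"
    using assms(3) by (auto simp: eigenvalue_def)
  then have w: "w \<in> carrier_vec n" "w \<noteq> 0\<^sub>v n"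
    using A by (auto simp: eigenvector_def)
  have Cw: "(\<Sum>j<n. of_real (A $$ (i, j)) * w $ j) = a * w $ i" if "i < n" for i
    using eigenvector_mult_vec_index[OF ev _ that] A that by simp
  define s where "s = (\<Sum>i<n. \<Sum>j<n. cnj (w $ i) * of_real (A $$ (i, j)) * w $ j)"
  define r where "r = (\<Sum>i<n. (cmod (w $ i))\<^sup>2)"
  have "s = (\<Sum>i<n. cnj (w $ i) * (a * w $ i))"
    by (simp add: s_def Cw mult.assoc flip: sum_distrib_left)
  also have "\<dots> = a * (\<Sum>i<n. w $ i * cnj (w $ i))"
    by (simp add: sum_distrib_left mult_ac)
  also have "\<dots> = a * of_real r"
    by (simp add: r_def flip: complex_norm_square)
  finally have s_eq: "s = a * of_real r" .
  have "cnj s = (\<Sum>i<n. \<Sum>j<n. cnj (w $ j) * of_real (A $$ (i, j)) * w $ i)"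
    by (simp add: s_def mult_ac)
  also have "\<dots> = (\<Sum>j<n. \<Sum>i<n. cnj (w $ j) * of_real (A $$ (i, j)) * w $ i)"
    by (rule sum.swap)
  also have "\<dots> = s"
    unfolding s_def by (intro sum.cong) (simp_all add: sym)
  finally have "s \<in> \<real>"
    by (simp add: Reals_cnj_iff)
  obtain i where "i < n" "w $ i \<noteq> 0"
    using w by (metis eq_vecI carrier_vecD index_zero_vec)
  then have "0 < (\<Sum>i\<in>{i}. (cmod (w $ i))\<^sup>2)"
    by simp
  also have "\<dots> \<le> r"
    unfolding r_def using \<open>i < n\<close> by (intro sum_mono2) auto
  finally have "a = s / of_real r"
    using s_eq by simp
  with \<open>s \<in> \<real>\<close> show ?thesis
    by simp
qed

lemma real_symmetric_char_poly_splits: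
  fixes A :: "real mat"
  assumes A: "A \<in> carrier_mat n n"
    and sym: "\<And>i j. i < n \<Longrightarrow> j < n \<Longrightarrow> A $$ (i, j) = A $$ (j, i)"
  obtains bs where "char_poly A = (\<Prod>b\<leftarrow>bs. [:- b, 1:])" and "length bs = n"
proof -
  interpret of_real_poly: map_poly_inj_comm_ring_hom complex_of_real ..
  let ?C = "map_mat complex_of_real A"
  obtain as where as: "char_poly ?C = (\<Prod>a\<leftarrow>as. [:- a, 1:])" "length as = n"
    using char_poly_factorized[of ?C n] A by auto
  have "a \<in> \<real>" if "a \<in> set as" for a
  proof (rule real_symmetric_eigenvalue_real[OF A sym])
    have "poly (char_poly ?C) a = 0"
      using that by (auto simp: as(1) poly_prod_list prod_list_zero_iff)
    then show "eigenvalue ?C a"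
      using A by (simp add: eigenvalue_root_char_poly[of _ n])
  qed
  then have "(\<Prod>a\<leftarrow>as. [:- a, 1:]) = (\<Prod>b\<leftarrow>map Re as. map_poly complex_of_real [:- b, 1:])"
    unfolding map_map o_def by (intro arg_cong[where f = prod_list] map_cong) (auto simp: Reals_def)
  then have "map_poly complex_of_real (char_poly A) =
      map_poly complex_of_real (\<Prod>b\<leftarrow>map Re as. [:- b, 1:])"
    using as(1) by (simp add: of_real_hom.char_poly_hom[OF A, symmetric] of_real_poly.hom_prod_list o_def)
  then show ?thesis
    using that[of "map Re as"] as(2) by simp
qed

lemma det_unit_lower_triangular:
  fixes S :: "'a :: comm_ring_1 mat"
  assumes "S \<in> carrier_mat n n"
    and "\<And>i j. i < j \<Longrightarrow> j < n \<Longrightarrow> S $$ (i, j) = 0" and "\<And>i. i < n \<Longrightarrow> S $$ (i, i) = 1"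
  shows "det S = 1"
proof -
  have "diag_mat S = replicate n 1"
    using assms by (intro nth_equalityI) (auto simp: diag_mat_def)
  then show ?thesis
    using det_lower_triangular[OF assms(2,1)] by simp
qed

definition row_reduced_minor :: "nat \<Rightarrow> 'a :: ring mat \<Rightarrow> 'a mat" where
  "row_reduced_minor m X = mat m m (\<lambda>(i, j). X $$ (Suc i, Suc j) - X $$ (0, Suc j))"

lemma det_replace_first_col_by_row_sums:
  fixes X :: "'a :: comm_ring_1 mat"
  assumes X: "X \<in> carrier_mat (Suc m) (Suc m)"
    and row_sums: "\<And>i. i < Suc m \<Longrightarrow> (\<Sum>j<Suc m. X $$ (i, j)) = c"
  shows "det X = det (mat (Suc m) (Suc m) (\<lambda>(i, j). if j = 0 then c else X $$ (i, j)))"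
    (is "_ = det ?Y")
proof -
  let ?N = "Suc m"
  define S where "S = mat ?N ?N (\<lambda>(i, j). if j = 0 \<or> i = j then 1 else 0 :: 'a)"
  have S: "S \<in> carrier_mat ?N ?N"
    by (simp add: S_def)
  have "X * S = ?Y"
  proof (rule eq_matI)
    fix i j assume "i < dim_row ?Y" "j < dim_col ?Y"
    then have ij: "i < ?N" "j < ?N" by auto
    have "(X * S) $$ (i, j) = (\<Sum>k<?N. X $$ (i, k) * S $$ (k, j))"
      using X S ij by (simp add: scalar_prod_def atLeast0LessThan)
    also have "\<dots> = (\<Sum>k<?N. if j = 0 \<or> k = j then X $$ (i, k) else 0)"
      using ij by (intro sum.cong) (auto simp: S_def)
    also have "\<dots> = ?Y $$ (i, j)"
      using ij row_sums by auto
    finally show "(X * S) $$ (i, j) = ?Y $$ (i, j)" .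
  qed (use X S in auto)
  moreover have "det S = 1"
    by (rule det_unit_lower_triangular) (auto simp: S_def)
  ultimately show ?thesis
    using det_mult[OF X S] by simp
qed

lemma det_const_first_col:
  fixes Y :: "'a :: comm_ring_1 mat"
  assumes Y: "Y \<in> carrier_mat (Suc m) (Suc m)" and first_col: "\<And>i. i < Suc m \<Longrightarrow> Y $$ (i, 0) = c"
  shows "det Y = c * det (row_reduced_minor m Y)"
proof -
  let ?N = "Suc m"
  define T where "T = mat ?N ?N (\<lambda>(i, j). if i = j then 1 else if j = 0 then - 1 else 0 :: 'a)"
  have T: "T \<in> carrier_mat ?N ?N"
    by (simp add: T_def)
  define Z where "Z = four_block_mat (mat 1 1 (\<lambda>_. c)) (mat 1 m (\<lambda>(_, j). Y $$ (0, Suc j)))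
    (0\<^sub>m m 1) (row_reduced_minor m Y)"
  have "T * Y = Z"
  proof (rule eq_matI)
    fix i j assume "i < dim_row Z" "j < dim_col Z"
    then have ij: "i < ?N" "j < ?N" by (auto simp: Z_def row_reduced_minor_def)
    have "(T * Y) $$ (i, j) = (\<Sum>k<?N. T $$ (i, k) * Y $$ (k, j))"
      using T Y ij by (simp add: scalar_prod_def atLeast0LessThan)
    also have "\<dots> = (\<Sum>k<?N. (if k = i then Y $$ (k, j) else 0) -
        (if i \<noteq> 0 \<and> k = 0 then Y $$ (k, j) else 0))"
      using ij by (intro sum.cong) (auto simp: T_def)
    also have "\<dots> = Z $$ (i, j)"
      using ij first_col by (cases i; cases j) (auto simp: sum_subtractf Z_def row_reduced_minor_def)
    finally show "(T * Y) $$ (i, j) = Z $$ (i, j)" .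
  qed (use Y in \<open>auto simp: Z_def T_def row_reduced_minor_def\<close>)
  moreover have "det T = 1"
    by (rule det_unit_lower_triangular) (auto simp: T_def)
  moreover have "det Z = det (mat 1 1 (\<lambda>_. c)) * det (row_reduced_minor m Y)"
    unfolding Z_def by (rule det_four_block_mat_lower_left_zero_col) (auto simp: row_reduced_minor_def)
  moreover have "det (mat 1 1 (\<lambda>_. c)) = c"
    by (subst det_lower_triangular[of 1]) (auto simp: diag_mat_def)
  ultimately show ?thesis
    using det_mult[OF T Y] by simp
qed

lemma det_const_row_sums:
  fixes X :: "'a :: comm_ring_1 mat"
  assumes X: "X \<in> carrier_mat (Suc m) (Suc m)"
    and row_sums: "\<And>i. i < Suc m \<Longrightarrow> (\<Sum>j<Suc m. X $$ (i, j)) = c"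
  shows "det X = c * det (row_reduced_minor m X)"
proof -
  let ?Y = "mat (Suc m) (Suc m) (\<lambda>(i, j). if j = 0 then c else X $$ (i, j))"
  have "det X = det ?Y"
    by (rule det_replace_first_col_by_row_sums[OF X row_sums])
  also have "\<dots> = c * det (row_reduced_minor m ?Y)"
    by (rule det_const_first_col) auto
  also have "row_reduced_minor m ?Y = row_reduced_minor m X"
    by (intro eq_matI) (auto simp: row_reduced_minor_def)
  finally show ?thesis .
qed

lemma ones_mat_carrier [simp]: "ones_mat n \<in> carrier_mat n n"
  and dim_ones_mat [simp]: "dim_row (ones_mat n) = n" "dim_col (ones_mat n) = n"
  by (auto simp: ones_mat_def)

lemma ones_mat_index [simp]: "i < n \<Longrightarrow> j < n \<Longrightarrow> ones_mat n $$ (i, j) = 1"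
  by (simp add: ones_mat_def)

lemma mult_ones_mat_right:
  fixes X :: "real mat"
  assumes "X \<in> carrier_mat n n" and "\<And>i. i < n \<Longrightarrow> (\<Sum>j<n. X $$ (i, j)) = c"
  shows "X * ones_mat n = c \<cdot>\<^sub>m ones_mat n"
  using assms by (intro eq_matI) (auto simp: scalar_prod_def atLeast0LessThan ones_mat_def)

lemma mult_ones_mat_left:
  fixes X :: "real mat"
  assumes "X \<in> carrier_mat n n" and "\<And>j. j < n \<Longrightarrow> (\<Sum>i<n. X $$ (i, j)) = c"
  shows "ones_mat n * X = c \<cdot>\<^sub>m ones_mat n"
  using assms by (intro eq_matI) (auto simp: scalar_prod_def atLeast0LessThan ones_mat_def)

lemma row_sums_mult:
  fixes X Y :: "'a :: comm_ring_1 mat"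
  assumes "X \<in> carrier_mat n n" and "Y \<in> carrier_mat n n"
    and "\<And>k. k < n \<Longrightarrow> (\<Sum>j<n. Y $$ (k, j)) = r" and "i < n"
  shows "(\<Sum>j<n. (X * Y) $$ (i, j)) = r * (\<Sum>k<n. X $$ (i, k))"
proof -
  have "(\<Sum>j<n. (X * Y) $$ (i, j)) = (\<Sum>j<n. \<Sum>k<n. X $$ (i, k) * Y $$ (k, j))"
    using assms by (simp add: scalar_prod_def atLeast0LessThan)
  also have "\<dots> = (\<Sum>k<n. X $$ (i, k) * (\<Sum>j<n. Y $$ (k, j)))"
    by (subst sum.swap) (simp add: sum_distrib_left)
  finally show ?thesis
    using assms by (simp add: sum_distrib_left mult.commute)
qed

lemma det_add_smult_ones_mat:
  fixes X :: "real mat"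
  assumes X: "X \<in> carrier_mat n n" and "0 < n"
    and row_sums: "\<And>i. i < n \<Longrightarrow> (\<Sum>j<n. X $$ (i, j)) = c"
  shows "c * det (X + d \<cdot>\<^sub>m ones_mat n) = (c + real n * d) * det X"
proof -
  obtain m where n: "n = Suc m"
    using \<open>0 < n\<close> gr0_implies_Suc by blast
  have "det (X + d \<cdot>\<^sub>m ones_mat n) = (c + real n * d) * det (row_reduced_minor m (X + d \<cdot>\<^sub>m ones_mat n))"
    by (rule det_const_row_sums; unfold n[symmetric]) (use X row_sums in \<open>auto simp: sum.distrib\<close>)
  also have "row_reduced_minor m (X + d \<cdot>\<^sub>m ones_mat n) = row_reduced_minor m X"
    using X n by (intro eq_matI) (auto simp: row_reduced_minor_def)
  moreover have "det X = c * det (row_reduced_minor m X)"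
    by (rule det_const_row_sums; unfold n[symmetric]) (use X row_sums in auto)
  ultimately show ?thesis
    by simp
qed

section \<open>Graph Laplacians\<close>

lemma laplacian_carrier [simp]: "laplacian n E \<in> carrier_mat n n"
  by (simp add: laplacian_def)

lemma dim_laplacian [simp]: "dim_row (laplacian n E) = n" "dim_col (laplacian n E) = n"
  by (simp_all add: laplacian_def)

lemma laplacian_index:
  assumes "simple_graph n E" and "i < n" and "j < n"
  shows "laplacian n E $$ (i, j) =
    (if i = j then \<Sum>k<n. if E i k then 1 else 0 else 0) - (if E i j then 1 else 0)"
proof -
  have "real (card {k. k < n \<and> E i k}) = (\<Sum>k<n. if E i k then 1 else 0)"
    by (simp add: sum.If_cases Int_def conj_commute)
  then show ?thesis
    using assms by (auto simp: laplacian_def simple_graph_def)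
qed

lemma laplacian_symmetric:
  "simple_graph n E \<Longrightarrow> i < n \<Longrightarrow> j < n \<Longrightarrow> laplacian n E $$ (i, j) = laplacian n E $$ (j, i)"
  by (auto simp: laplacian_index simple_graph_def)

lemma laplacian_row_sum_eq_0:
  assumes "simple_graph n E" and "i < n"
  shows "(\<Sum>j<n. laplacian n E $$ (i, j)) = 0"
  using assms by (simp add: laplacian_index sum_subtractf)

lemma laplacian_col_sum_eq_0:
  assumes "simple_graph n E" and "j < n"
  shows "(\<Sum>i<n. laplacian n E $$ (i, j)) = 0"
  using assms by (simp add: laplacian_symmetric[OF assms(1) _ assms(2)] laplacian_row_sum_eq_0)

lemma laplacian_mult_vec_index:
  assumes "simple_graph n E" and "v \<in> carrier_vec n" and "i < n"
  shows "(laplacian n E *\<^sub>v v) $ i = (\<Sum>j<n. (if E i j then 1 else 0) * (v $ i - v $ j))"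
proof -
  have "(laplacian n E *\<^sub>v v) $ i = (\<Sum>j<n. laplacian n E $$ (i, j) * v $ j)"
    using assms by (simp add: scalar_prod_def atLeast0LessThan)
  also have "\<dots> = (\<Sum>j<n. (if i = j then (\<Sum>k<n. if E i k then 1 else 0) * v $ j else 0)
      - (if E i j then 1 else 0) * v $ j)"
    using assms by (intro sum.cong) (auto simp: laplacian_index left_diff_distrib)
  also have "\<dots> = (\<Sum>j<n. (if E i j then 1 else 0) * (v $ i - v $ j))"
    using assms(3) by (simp add: sum_subtractf sum_distrib_right right_diff_distrib)
  finally show ?thesis .
qed

lemma laplacian_quadratic_form:
  assumes "simple_graph n E" and "v \<in> carrier_vec n"
  shows "2 * (v \<bullet> (laplacian n E *\<^sub>v v)) =
    (\<Sum>i<n. \<Sum>j<n. (if E i j then 1 else 0) * (v $ i - v $ j)\<^sup>2)"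
proof -
  define w :: "nat \<Rightarrow> nat \<Rightarrow> real" where "w i j = (if E i j then 1 else 0)" for i j
  have w_sym: "w i j = w j i" if "i < n" "j < n" for i j
    using assms that by (auto simp: w_def simple_graph_def)
  have "v \<bullet> (laplacian n E *\<^sub>v v) = (\<Sum>i<n. v $ i * (\<Sum>j<n. w i j * (v $ i - v $ j)))"
    using assms unfolding scalar_prod_def
    by (simp add: atLeast0LessThan laplacian_mult_vec_index w_def del: index_mult_mat_vec)
  then have form: "v \<bullet> (laplacian n E *\<^sub>v v) = (\<Sum>i<n. \<Sum>j<n. w i j * (v $ i * (v $ i - v $ j)))"
    by (simp add: sum_distrib_left mult.left_commute)
  also have "\<dots> = (\<Sum>i<n. \<Sum>j<n. w i j * (v $ j * (v $ j - v $ i)))"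
    by (subst sum.swap) (auto intro!: sum.cong simp: w_sym)
  finally show ?thesis
    unfolding mult_2 w_def[symmetric]
    by (subst form) (simp add: sum.distrib[symmetric] power2_eq_square algebra_simps)
qed

lemma laplacian_quadratic_form_nonneg:
  assumes "simple_graph n E" and "v \<in> carrier_vec n"
  shows "0 \<le> v \<bullet> (laplacian n E *\<^sub>v v)"
proof -
  have "0 \<le> (\<Sum>i<n. \<Sum>j<n. (if E i j then 1 else 0) * (v $ i - v $ j)\<^sup>2 :: real)"
    by (intro sum_nonneg) simp
  then show ?thesis
    using laplacian_quadratic_form[OF assms] by simp
qed

lemma simple_graph_complement: "simple_graph n E \<Longrightarrow> simple_graph n (\<lambda>i j. i \<noteq> j \<and> \<not> E i j)"
  by (auto simp: simple_graph_def)

lemma laplacian_complement: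
  assumes "simple_graph n E"
  shows "laplacian n (\<lambda>i j. i \<noteq> j \<and> \<not> E i j) = real n \<cdot>\<^sub>m 1\<^sub>m n - ones_mat n - laplacian n E"
proof (rule eq_matI)
  fix i j assume "i < dim_row (real n \<cdot>\<^sub>m 1\<^sub>m n - ones_mat n - laplacian n E)"
    "j < dim_col (real n \<cdot>\<^sub>m 1\<^sub>m n - ones_mat n - laplacian n E)"
  then have ij: "i < n" "j < n" by (auto simp: ones_mat_def)
  have "(\<Sum>k<n. if i \<noteq> k \<and> \<not> E i k then 1 else 0) =
      (\<Sum>k<n. 1 - (if i = k then 1 else 0) - (if E i k then 1 else 0) :: real)"
    using assms ij by (intro sum.cong) (auto simp: simple_graph_def)
  then show "laplacian n (\<lambda>i j. i \<noteq> j \<and> \<not> E i j) $$ (i, j) =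
      (real n \<cdot>\<^sub>m 1\<^sub>m n - ones_mat n - laplacian n E) $$ (i, j)"
    using assms ij simple_graph_complement[OF assms]
    by (cases "i = j") (simp_all add: laplacian_index ones_mat_def sum_subtractf simple_graph_def)
qed (auto simp: ones_mat_def)

lemma laplacian_eigenvalue_nonneg:
  assumes "simple_graph n E" and "eigenvalue (laplacian n E) l"
  shows "0 \<le> l"
proof -
  obtain v where v: "v \<in> carrier_vec n" "v \<noteq> 0\<^sub>v n" "laplacian n E *\<^sub>v v = l \<cdot>\<^sub>v v"
    using assms(2) by (auto simp: eigenvalue_def eigenvector_def)
  have "0 \<le> v \<bullet> (laplacian n E *\<^sub>v v)"
    using assms(1) v(1) by (rule laplacian_quadratic_form_nonneg)
  also have "\<dots> = l * (v \<bullet> v)"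
    using v by simp
  finally show ?thesis
    using conjugate_square_greater_0_vec[OF v(1)] v(2) by (simp add: zero_le_mult_iff)
qed

text \<open>An eigenvector of a nonzero eigenvalue \<open>l\<close> is orthogonal to the all-one vector, hence an
  eigenvector of the complement's Laplacian \<open>n I - J - Q\<^sub>1\<close> with eigenvalue \<open>n - l\<close>.\<close>
lemma laplacian_eigenvalue_le:
  assumes g: "simple_graph n E" and "eigenvalue (laplacian n E) l"
  shows "l \<le> real n"
proof (cases "l = 0")
  case False
  let ?L = "laplacian n E"
  obtain v where ev: "eigenvector ?L v l"
    using assms(2) by (auto simp: eigenvalue_def)
  then have v: "v \<in> carrier_vec n" "v \<noteq> 0\<^sub>v n"
    by (auto simp: eigenvector_def)
  have Lv: "(\<Sum>j<n. ?L $$ (i, j) * v $ j) = l * v $ i" if "i < n" for i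
    using ev that by (simp add: eigenvector_mult_vec_index)
  have "l * (\<Sum>i<n. v $ i) = (\<Sum>i<n. \<Sum>j<n. ?L $$ (i, j) * v $ j)"
    by (simp add: Lv sum_distrib_left)
  also have "\<dots> = (\<Sum>j<n. (\<Sum>i<n. ?L $$ (i, j)) * v $ j)"
    by (subst sum.swap) (simp add: sum_distrib_right)
  also have "\<dots> = 0"
    using g by (simp add: laplacian_col_sum_eq_0)
  finally have sum_v: "(\<Sum>i<n. v $ i) = 0"
    using False by simp
  have "laplacian n (\<lambda>i j. i \<noteq> j \<and> \<not> E i j) *\<^sub>v v = (real n - l) \<cdot>\<^sub>v v"
  proof (rule eq_vecI)
    fix i assume "i < dim_vec ((real n - l) \<cdot>\<^sub>v v)"
    then have i: "i < n" using v by simp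
    have "(laplacian n (\<lambda>i j. i \<noteq> j \<and> \<not> E i j) *\<^sub>v v) $ i =
        (\<Sum>j<n. (if i = j then real n * v $ j else 0) - v $ j - ?L $$ (i, j) * v $ j)"
      using g v i by (auto simp: laplacian_complement scalar_prod_def atLeast0LessThan ones_mat_def
          algebra_simps intro!: sum.cong)
    also have "\<dots> = (real n - l) * v $ i"
      using i by (simp add: sum_subtractf sum_v Lv left_diff_distrib)
    finally show "(laplacian n (\<lambda>i j. i \<noteq> j \<and> \<not> E i j) *\<^sub>v v) $ i = ((real n - l) \<cdot>\<^sub>v v) $ i"
      using i v by simp
  qed (use v in simp)
  then have "eigenvalue (laplacian n (\<lambda>i j. i \<noteq> j \<and> \<not> E i j)) (real n - l)"
    using v by (auto simp: eigenvalue_def eigenvector_def)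
  with laplacian_eigenvalue_nonneg[OF simple_graph_complement[OF g]] show ?thesis
    by fastforce
qed simp

lemma laplacian_char_poly_factors:
  assumes g: "simple_graph n E" and "0 < n"
  obtains R where "char_poly (laplacian n E) = (\<Prod>l\<leftarrow>0 # R. [:- l, 1:])" and "length R = n - 1"
    and "\<forall>l\<in>set R. 0 \<le> l \<and> l \<le> real n"
proof -
  let ?L = "laplacian n E"
  obtain bs where bs: "char_poly ?L = (\<Prod>b\<leftarrow>bs. [:- b, 1:])" "length bs = n"
    using real_symmetric_char_poly_splits[of ?L n] laplacian_symmetric[OF g] by auto
  have eigenvalue_iff: "eigenvalue ?L l \<longleftrightarrow> l \<in> set bs" for l
    by (force simp: eigenvalue_root_char_poly[of _ n] bs(1) poly_prod_list prod_list_zero_iff)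
  have "?L *\<^sub>v vec n (\<lambda>_. 1) = 0 \<cdot>\<^sub>v vec n (\<lambda>_. 1)"
    using g by (intro eq_vecI) (simp_all add: laplacian_mult_vec_index del: index_mult_mat_vec)
  moreover have "vec n (\<lambda>_. 1 :: real) \<noteq> 0\<^sub>v n"
    using \<open>0 < n\<close> by (auto simp: vec_eq_iff)
  ultimately have "eigenvector ?L (vec n (\<lambda>_. 1)) 0"
    by (simp add: eigenvector_def)
  then have "0 \<in> set bs"
    by (auto simp: eigenvalue_def simp flip: eigenvalue_iff)
  then obtain xs ys where "bs = xs @ 0 # ys"
    by (meson split_list)
  then show ?thesis
    using that[of "xs @ ys"] bs laplacian_eigenvalue_nonneg[OF g] laplacian_eigenvalue_le[OF g]
    by (auto simp: eigenvalue_iff mult_ac)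
qed

section \<open>The spectrum of the coupled matrix\<close>

lemma coupled_Q_carrier [simp]: "coupled_Q n Q1 p \<in> carrier_mat (n + n) (n + n)"
  by (simp add: coupled_Q_def)

lemma neg_char_matrix_coupled_Q:
  assumes Q1: "Q1 \<in> carrier_mat n n"
  shows "- char_matrix (coupled_Q n Q1 p) x = four_block_mat
    ((x - real n * p) \<cdot>\<^sub>m 1\<^sub>m n - Q1) (p \<cdot>\<^sub>m ones_mat n)
    (p \<cdot>\<^sub>m ones_mat n) ((x - real n * p - real n) \<cdot>\<^sub>m 1\<^sub>m n + Q1 + ones_mat n)"
    (is "_ = ?B")
proof (rule eq_matI)
  fix i j assume "i < dim_row ?B" "j < dim_col ?B"
  with Q1 show "(- char_matrix (coupled_Q n Q1 p) x) $$ (i, j) = ?B $$ (i, j)"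
    by (auto simp: char_matrix_def coupled_Q_def algebra_simps)
qed (use Q1 carrier_matD[OF coupled_Q_carrier] in \<open>auto simp: char_matrix_def\<close>)

text \<open>A matrix with constant row and column sums commutes with \<open>J\<close>.\<close>
lemma det_four_block_smult_ones_mat:
  fixes A D :: "real mat"
  assumes A: "A \<in> carrier_mat n n" and D: "D \<in> carrier_mat n n"
    and row_sums: "\<And>i. i < n \<Longrightarrow> (\<Sum>j<n. D $$ (i, j)) = c"
    and col_sums: "\<And>j. j < n \<Longrightarrow> (\<Sum>i<n. D $$ (i, j)) = c"
  shows "det (four_block_mat A (p \<cdot>\<^sub>m ones_mat n) (p \<cdot>\<^sub>m ones_mat n) D) =
    det (A * D - (p * p * real n) \<cdot>\<^sub>m ones_mat n)"
proof -
  let ?B = "p \<cdot>\<^sub>m ones_mat n"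
  have "?B * D = p \<cdot>\<^sub>m (c \<cdot>\<^sub>m ones_mat n)"
    unfolding mult_smult_assoc_mat[OF ones_mat_carrier D]
    by (simp add: mult_ones_mat_left[OF D col_sums])
  moreover have "D * ?B = p \<cdot>\<^sub>m (c \<cdot>\<^sub>m ones_mat n)"
    unfolding mult_smult_distrib[OF D ones_mat_carrier]
    by (simp add: mult_ones_mat_right[OF D row_sums])
  ultimately have "det (four_block_mat A ?B ?B D) = det (A * D - ?B * ?B)"
    using A D by (intro det_four_block_mat) auto
  also have "?B * ?B = (p * p * real n) \<cdot>\<^sub>m ones_mat n"
    unfolding mult_smult_assoc_mat[OF ones_mat_carrier smult_carrier_mat[OF ones_mat_carrier]]
      mult_smult_distrib[OF ones_mat_carrier ones_mat_carrier]
    by (simp add: mult_ones_mat_right[of _ n n]) (intro eq_matI; simp)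
  finally show ?thesis .
qed

lemma det_coupled_blocks:
  fixes Q1 :: "real mat"
  assumes Q1: "Q1 \<in> carrier_mat n n" and "0 < n"
    and row_sums: "\<And>i. i < n \<Longrightarrow> (\<Sum>j<n. Q1 $$ (i, j)) = 0"
    and col_sums: "\<And>j. j < n \<Longrightarrow> (\<Sum>i<n. Q1 $$ (i, j)) = 0"
  shows "y * (y - real n) * det (four_block_mat (y \<cdot>\<^sub>m 1\<^sub>m n - Q1) (p \<cdot>\<^sub>m ones_mat n)
      (p \<cdot>\<^sub>m ones_mat n) ((y - real n) \<cdot>\<^sub>m 1\<^sub>m n + Q1 + ones_mat n))
    = (y\<^sup>2 - (real n * p)\<^sup>2) * (det (y \<cdot>\<^sub>m 1\<^sub>m n - Q1) * det ((y - real n) \<cdot>\<^sub>m 1\<^sub>m n + Q1))"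
proof -
  let ?J = "ones_mat n"
  define A where "A = y \<cdot>\<^sub>m 1\<^sub>m n - Q1"
  define D0 where "D0 = (y - real n) \<cdot>\<^sub>m 1\<^sub>m n + Q1"
  have carrier: "A \<in> carrier_mat n n" "D0 \<in> carrier_mat n n"
    using Q1 by (auto simp: A_def D0_def)
  have row_sums_A: "(\<Sum>j<n. A $$ (i, j)) = y" if "i < n" for i
    using Q1 that by (simp add: A_def sum_subtractf row_sums flip: sum_distrib_left)
  have row_sums_D0: "(\<Sum>j<n. D0 $$ (i, j)) = y - real n" if "i < n" for i
    using Q1 that by (simp add: D0_def sum.distrib row_sums flip: sum_distrib_left)
  have "det (four_block_mat A (p \<cdot>\<^sub>m ?J) (p \<cdot>\<^sub>m ?J) (D0 + ?J)) =
      det (A * (D0 + ?J) - (p * p * real n) \<cdot>\<^sub>m ?J)"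
    using Q1 carrier
    by (intro det_four_block_smult_ones_mat[where c = y])
      (simp_all add: D0_def sum.distrib row_sums col_sums flip: sum_distrib_left)
  also have "A * (D0 + ?J) = A * D0 + y \<cdot>\<^sub>m ?J"
    using mult_add_distrib_mat[OF carrier ones_mat_carrier] mult_ones_mat_right[OF carrier(1) row_sums_A]
    by simp
  also have "A * D0 + y \<cdot>\<^sub>m ?J - (p * p * real n) \<cdot>\<^sub>m ?J = A * D0 + (y - p * p * real n) \<cdot>\<^sub>m ?J"
    using carrier by (intro eq_matI) (auto simp: algebra_simps)
  finally have det_blocks: "det (four_block_mat A (p \<cdot>\<^sub>m ?J) (p \<cdot>\<^sub>m ?J) (D0 + ?J)) =
      det (A * D0 + (y - p * p * real n) \<cdot>\<^sub>m ?J)" .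
  have "(\<Sum>j<n. (A * D0) $$ (i, j)) = (y - real n) * y" if "i < n" for i
    using row_sums_mult[OF carrier row_sums_D0 that] row_sums_A[OF that] by simp
  from det_add_smult_ones_mat[OF mult_carrier_mat[OF carrier] \<open>0 < n\<close> this, where d = "y - p * p * real n"]
  have "(y - real n) * y * det (A * D0 + (y - p * p * real n) \<cdot>\<^sub>m ?J) =
      (y\<^sup>2 - (real n * p)\<^sup>2) * (det A * det D0)"
    using carrier by (simp add: det_mult power2_eq_square algebra_simps)
  then show ?thesis
    using det_blocks by (simp add: A_def D0_def mult.commute add.assoc)
qed

lemma poly_char_poly_coupled_Q:
  fixes Q1 :: "real mat"
  assumes Q1: "Q1 \<in> carrier_mat n n" and "0 < n"
    and row_sums: "\<And>i. i < n \<Longrightarrow> (\<Sum>j<n. Q1 $$ (i, j)) = 0"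
    and col_sums: "\<And>j. j < n \<Longrightarrow> (\<Sum>i<n. Q1 $$ (i, j)) = 0"
  shows "(x - real n * p) * (x - real n * p - real n) * poly (char_poly (coupled_Q n Q1 p)) x =
    x * (x - 2 * real n * p) *
      (poly (char_poly Q1) (x - real n * p) * ((- 1) ^ n * poly (char_poly Q1) (real n + real n * p - x)))"
proof -
  define y where "y = x - real n * p"
  have "(x - real n * p) * (x - real n * p - real n) * poly (char_poly (coupled_Q n Q1 p)) x =
      y * (y - real n) * det (four_block_mat (y \<cdot>\<^sub>m 1\<^sub>m n - Q1)
        (p \<cdot>\<^sub>m ones_mat n) (p \<cdot>\<^sub>m ones_mat n) ((y - real n) \<cdot>\<^sub>m 1\<^sub>m n + Q1 + ones_mat n))"
    by (simp add: char_poly_matrix[OF coupled_Q_carrier] neg_char_matrix_coupled_Q[OF Q1] y_def)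
  also have "\<dots> = (y\<^sup>2 - (real n * p)\<^sup>2) *
      (det (y \<cdot>\<^sub>m 1\<^sub>m n - Q1) * det ((y - real n) \<cdot>\<^sub>m 1\<^sub>m n + Q1))"
    by (rule det_coupled_blocks[OF Q1 \<open>0 < n\<close> row_sums col_sums])
  finally show ?thesis
    by (simp add: det_char_matrix_form[OF Q1] det_shifted[OF Q1] y_def power2_eq_square algebra_simps)
qed

lemma char_poly_coupled_Q:
  fixes Q1 :: "real mat"
  assumes Q1: "Q1 \<in> carrier_mat n n" and "0 < n"
    and row_sums: "\<And>i. i < n \<Longrightarrow> (\<Sum>j<n. Q1 $$ (i, j)) = 0"
    and col_sums: "\<And>j. j < n \<Longrightarrow> (\<Sum>i<n. Q1 $$ (i, j)) = 0"
    and char_poly_Q1: "char_poly Q1 = (\<Prod>l\<leftarrow>0 # R. [:- l, 1:])" and len: "length R = n - 1"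
  shows "char_poly (coupled_Q n Q1 p) = (\<Prod>a\<leftarrow>0 # 2 * real n * p #
    map (\<lambda>l. l + real n * p) R @ map (\<lambda>l. real n + real n * p - l) R. [:- a, 1:])"
    (is "?P = ?R")
proof -
  \<comment> \<open>The pointwise identity is divided by \<open>?f\<close> in the polynomial ring, not at the roots of \<open>?f\<close>.\<close>
  let ?f = "[:- (real n * p), 1:] * [:- (real n * p + real n), 1:]"
  have q: "poly (char_poly Q1) t = (\<Prod>l\<leftarrow>0 # R. t - l)" for t
    by (simp only: char_poly_Q1 poly_linear_factors)
  have q_reflected: "(- 1) ^ n * poly (char_poly Q1) t = (\<Prod>l\<leftarrow>0 # R. l - t)" for t
    unfolding q linear_factors_reflect[symmetric] using len \<open>0 < n\<close> by simp
  have "poly (?f * ?P) x = poly (?f * ?R) x" for x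
  proof -
    have "poly (?f * ?P) x = (x - real n * p) * (x - real n * p - real n) * poly ?P x"
      by (simp add: algebra_simps)
    also have "\<dots> = x * (x - 2 * real n * p) *
        ((\<Prod>l\<leftarrow>0 # R. x - real n * p - l) * (\<Prod>l\<leftarrow>0 # R. l - (real n + real n * p - x)))"
      by (rule poly_char_poly_coupled_Q[OF Q1 \<open>0 < n\<close> row_sums col_sums, unfolded q_reflected, unfolded q])
    also have "\<dots> = poly (?f * ?R) x"
    proof -
      have "(\<Prod>l\<leftarrow>R. x - real n * p - l) = (\<Prod>l\<leftarrow>R. x - (l + real n * p))"
        by (simp add: algebra_simps)
      then show ?thesis
        unfolding poly_mult poly_linear_factors by (simp add: o_def) (simp add: algebra_simps)
    qed
    finally show ?thesis .
  qed
  then have "?f * ?P = ?f * ?R"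
    by (simp add: poly_eq_poly_eq_iff[symmetric] fun_eq_iff del: poly_mult)
  moreover have "?f \<noteq> 0"
    by (simp only: mult_eq_0_iff) simp
  ultimately show ?thesis
    using mult_left_cancel by blast
qed

section \<open>Ordered eigenvalues and the transition threshold\<close>

lemma mu_linear_factors: "char_poly A = (\<Prod>a\<leftarrow>L. [:- a, 1:]) \<Longrightarrow> mu A k = rev (sort L) ! (k - 1)"
  by (simp add: mu_def proots_linear_factors)

lemma sorted_hd_eq_Min: "sorted xs \<Longrightarrow> xs \<noteq> [] \<Longrightarrow> hd xs = Min (set xs)"
  by (cases xs) (simp_all add: Min_insert2)

lemma sorted_last_eq_Max: "sorted xs \<Longrightarrow> xs \<noteq> [] \<Longrightarrow> last xs = Max (set xs)"
  by (induction xs rule: rev_induct) (simp_all add: sorted_append Max_insert2)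

lemma mu_of_zero_and_nonneg_roots:
  assumes "char_poly A = (\<Prod>l\<leftarrow>0 # R. [:- l, 1:])" and "\<forall>l\<in>set R. 0 \<le> l" and "R \<noteq> []"
  shows "mu A 1 = Max (set R)" and "mu A (length R) = Min (set R)"
proof -
  have "sort (0 # R) = 0 # sort R"
    using assms(2) by (simp add: insort_is_Cons)
  then have mu: "mu A k = (rev (sort R) @ [0]) ! (k - 1)" for k
    using mu_linear_factors[OF assms(1)] by simp
  have "sort R \<noteq> []"
    using assms(3) by (metis length_0_conv length_sort)
  then have "mu A 1 = last (sort R)"
    using assms(3) by (simp add: mu nth_append rev_nth last_conv_nth)
  with \<open>sort R \<noteq> []\<close> show "mu A 1 = Max (set R)"
    by (simp add: sorted_last_eq_Max)
  have "mu A (length R) = hd (sort R)"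
    using assms(3) \<open>sort R \<noteq> []\<close> by (simp add: mu nth_append rev_nth hd_conv_nth)
  with \<open>sort R \<noteq> []\<close> show "mu A (length R) = Min (set R)"
    by (simp add: sorted_hd_eq_Min)
qed

lemma mu_coupled_laplacian_eq_iff:
  assumes "simple_graph n E" and "2 \<le> n" and "0 < p"
    and char_poly_L: "char_poly (laplacian n E) = (\<Prod>l\<leftarrow>0 # R. [:- l, 1:])"
    and len: "length R = n - 1" and bounds: "\<forall>l\<in>set R. 0 \<le> l \<and> l \<le> real n"
  shows "mu (coupled_Q n (laplacian n E) p) (2 * n - 1) = 2 * real n * p \<longleftrightarrow>
    real n * p \<le> Min (set R) \<and> Max (set R) \<le> real n - real n * p"
proof -
  have "R \<noteq> []"
    using len \<open>2 \<le> n\<close> by auto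
  let ?S = "2 * real n * p # map (\<lambda>l. l + real n * p) R @ map (\<lambda>l. real n + real n * p - l) R"
  have "char_poly (coupled_Q n (laplacian n E) p) = (\<Prod>a\<leftarrow>0 # ?S. [:- a, 1:])"
    using assms by (intro char_poly_coupled_Q) (auto simp: laplacian_row_sum_eq_0 laplacian_col_sum_eq_0)
  moreover have "\<forall>s\<in>set ?S. 0 \<le> s"
    using bounds \<open>0 < p\<close> by (auto intro!: add_increasing2)
  ultimately have "mu (coupled_Q n (laplacian n E) p) (length ?S) = Min (set ?S)"
    by (rule mu_of_zero_and_nonneg_roots(2)) simp
  moreover have "length ?S = 2 * n - 1"
    using len \<open>2 \<le> n\<close> by simp
  ultimately have mu_eq: "mu (coupled_Q n (laplacian n E) p) (2 * n - 1) = Min (set ?S)"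
    by simp
  have "Min (set ?S) = 2 * real n * p \<longleftrightarrow> (\<forall>s\<in>set ?S. 2 * real n * p \<le> s)"
    by (subst Min_eq_iff) auto
  also have "\<dots> \<longleftrightarrow> (\<forall>l\<in>set R. real n * p \<le> l \<and> l \<le> real n - real n * p)"
    by (simp add: ball_Un) (auto simp: algebra_simps)
  also have "\<dots> \<longleftrightarrow> real n * p \<le> Min (set R) \<and> Max (set R) \<le> real n - real n * p"
    using \<open>R \<noteq> []\<close> by (simp add: Min_ge_iff Max_le_iff ball_conj_distrib)
  finally show ?thesis
    unfolding mu_eq .
qed

theorem mainTheorem6:
  fixes n :: nat and E :: "nat \<Rightarrow> nat \<Rightarrow> bool"
  assumes "n \<ge> 2" and "simple_graph n E"
  shows "p_star n (laplacian n E) =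
           min (mu (laplacian n E) (n - 1) / real n) (1 - mu (laplacian n E) 1 / real n)"
proof -
  obtain R where char_poly_L: "char_poly (laplacian n E) = (\<Prod>l\<leftarrow>0 # R. [:- l, 1:])"
    and len: "length R = n - 1" and bounds: "\<forall>l\<in>set R. 0 \<le> l \<and> l \<le> real n"
    using laplacian_char_poly_factors[OF assms(2)] assms(1) by auto
  have "R \<noteq> []"
    using len assms(1) by auto
  then have mu_L: "mu (laplacian n E) 1 = Max (set R)" "mu (laplacian n E) (n - 1) = Min (set R)"
    using mu_of_zero_and_nonneg_roots[OF char_poly_L] bounds len by auto
  define M where "M = min (Min (set R) / real n) (1 - Max (set R) / real n)"
  have "0 \<le> Min (set R)" "Max (set R) \<le> real n"
    using bounds \<open>R \<noteq> []\<close> by simp_all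
  then have "0 \<le> M"
    using assms(1) by (simp add: M_def)
  have "{0} \<union> {p. p > 0 \<and> mu (coupled_Q n (laplacian n E) p) (2 * n - 1) = 2 * real n * p} = {0..M}"
    using mu_coupled_laplacian_eq_iff[OF assms(2,1) _ char_poly_L len bounds] assms(1) \<open>0 \<le> M\<close>
    by (auto simp: M_def field_simps)
  then show ?thesis
    unfolding p_star_def mu_L M_def[symmetric] using \<open>0 \<le> M\<close> by simp
qed

end
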